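(* Define the Poisson bracket $\{H,G\}=\oint\mathsf E h\cdot\mathcal{P}\,\mathsf E g\,\mathrm{d}x$, where $G(k_1,k_2)=\oint g\,\mathrm{d}x$ and $H(k_1,k_2)=\oint h\,\mathrm{d}x$, and $g,h$ are functions of periodic $k_1,k_2$ and their derivatives. Then $\mathrm{d}H[X^g]=\{H,G\}$.
   Context: Closed curves $\gamma:S^1\to\mathbb R^3$ with $\det(\gamma,\gamma',\gamma'')=1$ (centroaffine arclength $x$), invariants $k_1,k_2$ defined by $\gamma'''=(k_1\gamma)'+k_2\gamma$. $D=\partial/\partial x$; $\mathsf E f=\big(\sum_{j\ge0}(-D)^j\partial f/\partial k_1^{(j)},\ \sum_{j\ge0}(-D)^j\partial f/\partial k_2^{(j)}\big)^{\mathrm T}$; $\mathcal{P}=\begin{pmatrix}-2D^3+Dk_1+k_1D & -D^4+D^2k_1+2Dk_2+k_2D\\ D^4-k_1D^2+2k_2D+Dk_2 & \tfrac23(D^5+k_1Dk_1-k_1D^3-D^3k_1)+[k_2,D^2]\end{pmatrix}$. For a local function $g$, $X^g:=(\mathsf E g)_1\gamma'+(\mathsf E g)_2\gamma''+r_0\gamma$, where $r_0$ is determined by the non-stretching condition ($X=a\gamma+b\gamma'+c\gamma''$ is non-stretching iff $b'=-a-\tfrac13(c''+2k_1c)$). *)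

theory Defs
  imports "HOL-Analysis.Analysis"
begin

definition Dv :: "(real \<Rightarrow> 'a::real_normed_vector) \<Rightarrow> real \<Rightarrow> 'a" where
  "Dv f = (\<lambda>x. vector_derivative f (at x))"

definition smooth_fn :: "(real \<Rightarrow> 'a::real_normed_vector) \<Rightarrow> bool" where
  "smooth_fn f \<longleftrightarrow> (\<forall>n x. ((Dv ^^ n) f) differentiable (at x))"

definition periodic_fn :: "real \<Rightarrow> (real \<Rightarrow> 'a) \<Rightarrow> bool" where
  "periodic_fn L f \<longleftrightarrow> (\<forall>x. f (x + L) = f x)"

definition det3 :: "real^3 \<Rightarrow> real^3 \<Rightarrow> real^3 \<Rightarrow> real" where
  "det3 a b c = det (vector [a, b, c] :: real^3^3)"

text \<open>A closed (L-periodic) smooth curve in centroaffine arclength parametrisation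
  det(g,g',g'')=1, with centroaffine invariants k1,k2: g''' = (k1 g)' + k2 g.\<close>
definition ca_curve :: "real \<Rightarrow> (real \<Rightarrow> real^3) \<Rightarrow> (real \<Rightarrow> real) \<Rightarrow> (real \<Rightarrow> real) \<Rightarrow> bool" where
  "ca_curve L \<gamma> k1 k2 \<longleftrightarrow> L > 0 \<and> smooth_fn \<gamma> \<and> periodic_fn L \<gamma> \<and>
     smooth_fn k1 \<and> smooth_fn k2 \<and>
     (\<forall>x. det3 (\<gamma> x) (Dv \<gamma> x) ((Dv ^^ 2) \<gamma> x) = 1) \<and>
     (\<forall>x. (Dv ^^ 3) \<gamma> x = Dv (\<lambda>y. k1 y *\<^sub>R \<gamma> y) x + k2 x *\<^sub>R \<gamma> x)"

text \<open>Local functions: f u v where u j stands for k1^(j), v j for k2^(j).\<close>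
type_synonym jetfn = "(nat \<Rightarrow> real) \<Rightarrow> (nat \<Rightarrow> real) \<Rightarrow> real"

definition pd1 :: "nat \<Rightarrow> jetfn \<Rightarrow> jetfn" where
  "pd1 j f = (\<lambda>u v. deriv (\<lambda>s. f (u(j := s)) v) (u j))"

definition pd2 :: "nat \<Rightarrow> jetfn \<Rightarrow> jetfn" where
  "pd2 j f = (\<lambda>u v. deriv (\<lambda>s. f u (v(j := s))) (v j))"

text \<open>Iterated partial derivatives: (True,j) = d/dk1^(j), (False,j) = d/dk2^(j).\<close>
fun pds :: "(bool \<times> nat) list \<Rightarrow> jetfn \<Rightarrow> jetfn" where
  "pds [] f = f"
| "pds ((b, j) # ws) f = (if b then pd1 j (pds ws f) else pd2 j (pds ws f))"

definition local_fn :: "nat \<Rightarrow> jetfn \<Rightarrow> bool" where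
  "local_fn N f \<longleftrightarrow>
     (\<forall>u u' v v'. (\<forall>j<N. u j = u' j \<and> v j = v' j) \<longrightarrow> f u v = f u' v') \<and>
     (\<forall>ws. (\<forall>j u v. (\<lambda>s. pds ws f (u(j := s)) v) differentiable (at (u j))) \<and>
           (\<forall>j u v. (\<lambda>s. pds ws f u (v(j := s))) differentiable (at (v j))) \<and>
           continuous_on UNIV (\<lambda>p. pds ws f (fst p) (snd p)))"

definition jet :: "(real \<Rightarrow> real) \<Rightarrow> real \<Rightarrow> nat \<Rightarrow> real" where
  "jet k x = (\<lambda>j. (Dv ^^ j) k x)"

text \<open>Variational derivative E f (sum over j<N suffices for local_fn N f).\<close>
definition E1 :: "nat \<Rightarrow> jetfn \<Rightarrow> (real \<Rightarrow> real) \<Rightarrow> (real \<Rightarrow> real) \<Rightarrow> real \<Rightarrow> real" where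
  "E1 N f k1 k2 x = (\<Sum>j<N. (-1) ^ j * (Dv ^^ j) (\<lambda>y. pd1 j f (jet k1 y) (jet k2 y)) x)"

definition E2 :: "nat \<Rightarrow> jetfn \<Rightarrow> (real \<Rightarrow> real) \<Rightarrow> (real \<Rightarrow> real) \<Rightarrow> real \<Rightarrow> real" where
  "E2 N f k1 k2 x = (\<Sum>j<N. (-1) ^ j * (Dv ^^ j) (\<lambda>y. pd2 j f (jet k1 y) (jet k2 y)) x)"

definition Pop1 :: "(real \<Rightarrow> real) \<Rightarrow> (real \<Rightarrow> real) \<Rightarrow> (real \<Rightarrow> real) \<Rightarrow> (real \<Rightarrow> real) \<Rightarrow> real \<Rightarrow> real" where
  "Pop1 k1 k2 a b = (\<lambda>x.
      - 2 * (Dv ^^ 3) a x + Dv (\<lambda>y. k1 y * a y) x + k1 x * Dv a x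
      - (Dv ^^ 4) b x + (Dv ^^ 2) (\<lambda>y. k1 y * b y) x + 2 * Dv (\<lambda>y. k2 y * b y) x + k2 x * Dv b x)"

definition Pop2 :: "(real \<Rightarrow> real) \<Rightarrow> (real \<Rightarrow> real) \<Rightarrow> (real \<Rightarrow> real) \<Rightarrow> (real \<Rightarrow> real) \<Rightarrow> real \<Rightarrow> real" where
  "Pop2 k1 k2 a b = (\<lambda>x.
      (Dv ^^ 4) a x - k1 x * (Dv ^^ 2) a x + 2 * (k2 x * Dv a x) + Dv (\<lambda>y. k2 y * a y) x
      + 2 / 3 * ((Dv ^^ 5) b x + k1 x * Dv (\<lambda>y. k1 y * b y) x - k1 x * (Dv ^^ 3) b x
                 - (Dv ^^ 3) (\<lambda>y. k1 y * b y) x)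
      + (k2 x * (Dv ^^ 2) b x - (Dv ^^ 2) (\<lambda>y. k2 y * b y) x))"

definition pbracket :: "real \<Rightarrow> nat \<Rightarrow> jetfn \<Rightarrow> jetfn \<Rightarrow> (real \<Rightarrow> real) \<Rightarrow> (real \<Rightarrow> real) \<Rightarrow> real" where
  "pbracket L N h g k1 k2 = integral {0..L} (\<lambda>x.
      E1 N h k1 k2 x * Pop1 k1 k2 (E1 N g k1 k2) (E2 N g k1 k2) x
    + E2 N h k1 k2 x * Pop2 k1 k2 (E1 N g k1 k2) (E2 N g k1 k2) x)"

definition functional :: "real \<Rightarrow> jetfn \<Rightarrow> (real \<Rightarrow> real) \<Rightarrow> (real \<Rightarrow> real) \<Rightarrow> real" where
  "functional L f k1 k2 = integral {0..L} (\<lambda>x. f (jet k1 x) (jet k2 x))"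

text \<open>X = a g + b g' + c g'' is non-stretching iff b' = -a - (c'' + 2 k1 c)/3.\<close>
definition nonstretching :: "(real \<Rightarrow> real) \<Rightarrow> (real \<Rightarrow> real) \<Rightarrow> (real \<Rightarrow> real) \<Rightarrow> (real \<Rightarrow> real) \<Rightarrow> bool" where
  "nonstretching k1 a b c \<longleftrightarrow> (\<forall>x. Dv b x = - a x - 1 / 3 * ((Dv ^^ 2) c x + 2 * k1 x * c x))"

definition vfield :: "(real \<Rightarrow> real^3) \<Rightarrow> (real \<Rightarrow> real) \<Rightarrow> (real \<Rightarrow> real) \<Rightarrow> (real \<Rightarrow> real) \<Rightarrow> real \<Rightarrow> real^3" where
  "vfield \<gamma> a b c = (\<lambda>x. a x *\<^sub>R \<gamma> x + b x *\<^sub>R Dv \<gamma> x + c x *\<^sub>R (Dv ^^ 2) \<gamma> x)"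

definition Dt :: "(real \<Rightarrow> real \<Rightarrow> 'a::real_normed_vector) \<Rightarrow> real \<Rightarrow> real \<Rightarrow> 'a" where
  "Dt F = (\<lambda>t x. vector_derivative (\<lambda>s. F s x) (at t))"

definition Dx :: "(real \<Rightarrow> real \<Rightarrow> 'a::real_normed_vector) \<Rightarrow> real \<Rightarrow> real \<Rightarrow> 'a" where
  "Dx F = (\<lambda>t x. vector_derivative (F t) (at x))"

fun pds2 :: "bool list \<Rightarrow> (real \<Rightarrow> real \<Rightarrow> 'a::real_normed_vector) \<Rightarrow> real \<Rightarrow> real \<Rightarrow> 'a" where
  "pds2 [] F = F"
| "pds2 (b # ws) F = (if b then Dt (pds2 ws F) else Dx (pds2 ws F))"

definition smooth2 :: "(real \<Rightarrow> real \<Rightarrow> 'a::real_normed_vector) \<Rightarrow> bool" where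
  "smooth2 F \<longleftrightarrow> (\<forall>ws. (\<forall>t x. (\<lambda>s. pds2 ws F s x) differentiable (at t)) \<and>
                        (\<forall>t x. (pds2 ws F t) differentiable (at x)) \<and>
                        continuous_on UNIV (\<lambda>p. pds2 ws F (fst p) (snd p)))"

end

theory Submission
  imports Defs
begin

text \<open>Along a smooth family \<open>\<Gamma>\<^sub>t\<close> of closed centroaffine curves with \<open>\<Gamma>\<^sub>0 = \<gamma>\<close> and velocity
  \<open>X\<^sup>g\<close>, the invariants are given by the determinant formulas \<open>k\<^sub>1 = det(\<Gamma>, \<Gamma>''', \<Gamma>'')\<close> and
  \<open>k\<^sub>1' + k\<^sub>2 = det(\<Gamma>''', \<Gamma>', \<Gamma>'')\<close>. Differentiating them in \<open>t\<close> (exchanging \<open>\<partial>\<^sub>t\<close> and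
  \<open>\<partial>\<^sub>x\<close>) and expanding the derivatives of \<open>X\<^sup>g\<close> in the frame \<open>\<gamma>, \<gamma>', \<gamma>''\<close>, the non-stretching
  condition makes the invariants move with velocity \<open>\<P> \<E> g\<close>. Differentiating \<open>H\<close> under the
  integral sign by the chain rule and integrating by parts over a period then gives
  \<open>dH[X\<^sup>g] = \<ointegral> \<E> h \<cdot> \<P> \<E> g = {H, G}\<close>.\<close>

section \<open>Calculus of functions of one variable\<close>

lemma Dv_eqI: "(f has_vector_derivative d) (at x) \<Longrightarrow> Dv f x = d"
  by (simp add: Dv_def vector_derivative_at)

lemma Dv_eqI_real: "((f::real \<Rightarrow> real) has_real_derivative d) (at x) \<Longrightarrow> Dv f x = d"
  by (rule Dv_eqI) (simp add: has_real_derivative_iff_has_vector_derivative)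

lemma has_vector_derivative_Dv: "f differentiable at x \<Longrightarrow> (f has_vector_derivative Dv f x) (at x)"
  by (simp add: Dv_def vector_derivative_works[symmetric])

lemma has_real_derivative_Dv: "(f::real \<Rightarrow> real) differentiable at x \<Longrightarrow> (f has_real_derivative Dv f x) (at x)"
  using has_vector_derivative_Dv has_real_derivative_iff_has_vector_derivative by blast

lemma funpow_Dv_Suc_right: "(Dv ^^ Suc n) f = (Dv ^^ n) (Dv f)"
  by (simp add: funpow_Suc_right del: funpow.simps)

lemma funpow_Dv_numeral:
  "(Dv ^^ 2) f = Dv (Dv f)" "(Dv ^^ 3) f = Dv (Dv (Dv f))"
  "(Dv ^^ 4) f = Dv (Dv (Dv (Dv f)))" "(Dv ^^ 5) f = Dv (Dv (Dv (Dv (Dv f))))"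
  by (simp_all add: numeral_eq_Suc)

lemma Dv_add:
  "(\<And>x. f differentiable at x) \<Longrightarrow> (\<And>x. g differentiable at x) \<Longrightarrow>
   Dv (\<lambda>y. f y + g y) = (\<lambda>y. Dv f y + Dv g y)"
  by (rule ext, rule Dv_eqI) (auto intro!: has_vector_derivative_add has_vector_derivative_Dv)

lemma Dv_diff:
  "(\<And>x. f differentiable at x) \<Longrightarrow> (\<And>x. g differentiable at x) \<Longrightarrow>
   Dv (\<lambda>y. f y - g y) = (\<lambda>y. Dv f y - Dv g y)"
  by (rule ext, rule Dv_eqI) (auto intro!: has_vector_derivative_diff has_vector_derivative_Dv)

lemma Dv_minus: "(\<And>x. f differentiable at x) \<Longrightarrow> Dv (\<lambda>y. - f y) = (\<lambda>y. - Dv f y)"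
  by (rule ext, rule Dv_eqI) (auto intro!: has_vector_derivative_minus has_vector_derivative_Dv)

lemma Dv_const: "Dv (\<lambda>y. c) = (\<lambda>y. 0)"
  by (rule ext, rule Dv_eqI) auto

lemma (in bounded_bilinear) Dv_prod:
  "(\<And>x. f differentiable at x) \<Longrightarrow> (\<And>x. g differentiable at x) \<Longrightarrow>
   Dv (\<lambda>y. prod (f y) (g y)) = (\<lambda>y. prod (Dv f y) (g y) + prod (f y) (Dv g y))"
  by (rule ext, rule Dv_eqI, subst add.commute) (intro has_vector_derivative has_vector_derivative_Dv)

lemma (in bounded_bilinear) differentiable_prod:
  "(f :: real \<Rightarrow> 'a) differentiable at x \<Longrightarrow> g differentiable at x \<Longrightarrow>
   (\<lambda>y. prod (f y) (g y)) differentiable at x"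
  using has_vector_derivative[OF has_vector_derivative_Dv has_vector_derivative_Dv, of f x g]
  by (auto intro: differentiableI_vector)

lemmas Dv_mult = bounded_bilinear.Dv_prod[OF bounded_bilinear_mult]
lemmas Dv_scaleR = bounded_bilinear.Dv_prod[OF bounded_bilinear_scaleR]

lemma periodic_fn_Dv:
  assumes p: "periodic_fn L f" and d: "\<And>x. f differentiable at x"
  shows "periodic_fn L (Dv f)"
  unfolding periodic_fn_def
proof
  fix x
  have "((f \<circ> (\<lambda>y. y + L)) has_vector_derivative 1 *\<^sub>R Dv f (x + L)) (at x)"
    by (rule vector_diff_chain_at) (auto intro!: derivative_eq_intros has_vector_derivative_Dv d)
  moreover have "f \<circ> (\<lambda>y. y + L) = f"
    using p by (simp add: periodic_fn_def o_def)
  ultimately show "Dv f (x + L) = Dv f x"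
    using Dv_eqI by (metis scaleR_one)
qed

definition smooth_upto :: "nat \<Rightarrow> (real \<Rightarrow> 'a::real_normed_vector) \<Rightarrow> bool" where
  "smooth_upto n f \<longleftrightarrow> (\<forall>m\<le>n. \<forall>x. (Dv ^^ m) f differentiable at x)"

lemma smooth_upto_0: "smooth_upto 0 f \<longleftrightarrow> (\<forall>x. f differentiable at x)"
  by (simp add: smooth_upto_def)

lemma smooth_upto_Suc: "smooth_upto (Suc n) f \<longleftrightarrow> (\<forall>x. f differentiable at x) \<and> smooth_upto n (Dv f)"
  unfolding smooth_upto_def
  by (metis (no_types, opaque_lifting) Suc_le_mono funpow_0 funpow_Dv_Suc_right le0 not0_implies_Suc)

lemma smooth_upto_mono: "smooth_upto n f \<Longrightarrow> m \<le> n \<Longrightarrow> smooth_upto m f"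
  unfolding smooth_upto_def by auto

lemma smooth_fn_iff_smooth_upto: "smooth_fn f \<longleftrightarrow> (\<forall>n. smooth_upto n f)"
  unfolding smooth_fn_def smooth_upto_def by auto

lemma smooth_fn_iff_Dv: "smooth_fn f \<longleftrightarrow> (\<forall>x. f differentiable at x) \<and> smooth_fn (Dv f)"
  unfolding smooth_fn_iff_smooth_upto
  by (metis smooth_upto_0 smooth_upto_Suc not0_implies_Suc)

lemma smooth_fn_differentiable [simp]: "smooth_fn f \<Longrightarrow> f differentiable at x"
  using smooth_fn_iff_Dv by blast

lemma smooth_fn_Dv [simp]: "smooth_fn f \<Longrightarrow> smooth_fn (Dv f)"
  using smooth_fn_iff_Dv by blast

lemma smooth_fn_funpow_Dv [simp]: "smooth_fn f \<Longrightarrow> smooth_fn ((Dv ^^ n) f)"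
  by (induction n) auto

lemma smooth_fn_continuous_on [simp]: "smooth_fn f \<Longrightarrow> continuous_on S f"
  by (intro continuous_at_imp_continuous_on ballI differentiable_imp_continuous_within smooth_fn_differentiable)

lemma smooth_upto_add: "smooth_upto n f \<Longrightarrow> smooth_upto n g \<Longrightarrow> smooth_upto n (\<lambda>y. f y + g y)"
proof (induction n arbitrary: f g)
  case (Suc n)
  then have "\<And>x. f differentiable at x" "\<And>x. g differentiable at x"
    by (auto simp: smooth_upto_Suc)
  with Suc show ?case
    by (auto simp: smooth_upto_Suc Dv_add)
qed (auto simp: smooth_upto_0)

lemma smooth_upto_const: "smooth_upto n (\<lambda>y. c)"
  by (induction n arbitrary: c) (auto simp: smooth_upto_0 smooth_upto_Suc Dv_const)

lemma smooth_upto_minus: "smooth_upto n f \<Longrightarrow> smooth_upto n (\<lambda>y. - f y)"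
proof (induction n arbitrary: f)
  case (Suc n)
  then have "\<And>x. f differentiable at x"
    by (auto simp: smooth_upto_Suc)
  with Suc show ?case
    by (auto simp: smooth_upto_Suc Dv_minus)
qed (auto simp: smooth_upto_0)

lemma smooth_upto_sum:
  "(\<And>i. i \<in> A \<Longrightarrow> smooth_upto n (f i)) \<Longrightarrow> smooth_upto n (\<lambda>y. \<Sum>i\<in>A. f i y)"
  by (induction A rule: infinite_finite_induct) (auto intro!: smooth_upto_add simp: smooth_upto_const)

lemma (in bounded_bilinear) smooth_upto_prod:
  "smooth_upto n f \<Longrightarrow> smooth_upto n g \<Longrightarrow> smooth_upto n (\<lambda>y. prod (f y) (g y))"
proof (induction n arbitrary: f g)
  case 0
  then show ?case
    by (simp add: smooth_upto_0 differentiable_prod)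
next
  case (Suc n)
  then have d: "\<And>x. f differentiable at x" "\<And>x. g differentiable at x"
    by (auto simp: smooth_upto_Suc)
  have "smooth_upto n f" "smooth_upto n g"
    using Suc.prems smooth_upto_mono le_SucI by blast+
  with Suc show ?case
    by (auto simp: smooth_upto_Suc Dv_prod[OF d] differentiable_prod intro!: smooth_upto_add)
qed

lemma smooth_fn_add [simp]: "smooth_fn f \<Longrightarrow> smooth_fn g \<Longrightarrow> smooth_fn (\<lambda>y. f y + g y)"
  by (simp add: smooth_fn_iff_smooth_upto smooth_upto_add)

lemma smooth_fn_const [simp]: "smooth_fn (\<lambda>y. c)"
  by (simp add: smooth_fn_iff_smooth_upto smooth_upto_const)

lemma smooth_fn_minus [simp]: "smooth_fn f \<Longrightarrow> smooth_fn (\<lambda>y. - f y)"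
  by (simp add: smooth_fn_iff_smooth_upto smooth_upto_minus)

lemma smooth_fn_diff [simp]: "smooth_fn f \<Longrightarrow> smooth_fn g \<Longrightarrow> smooth_fn (\<lambda>y. f y - g y)"
  using smooth_fn_add[of f "\<lambda>y. - g y"] by simp

lemma smooth_fn_sum [simp]:
  "(\<And>i. i \<in> A \<Longrightarrow> smooth_fn (f i)) \<Longrightarrow> smooth_fn (\<lambda>y. \<Sum>i\<in>A. f i y)"
  by (simp add: smooth_fn_iff_smooth_upto smooth_upto_sum)

lemma (in bounded_bilinear) smooth_fn_prod: "smooth_fn f \<Longrightarrow> smooth_fn g \<Longrightarrow> smooth_fn (\<lambda>y. prod (f y) (g y))"
  by (simp add: smooth_fn_iff_smooth_upto smooth_upto_prod)

lemmas smooth_fn_mult [simp] = bounded_bilinear.smooth_fn_prod[OF bounded_bilinear_mult]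
lemmas smooth_fn_scaleR [simp] = bounded_bilinear.smooth_fn_prod[OF bounded_bilinear_scaleR]

lemma periodic_fn_funpow_Dv: "periodic_fn L f \<Longrightarrow> smooth_fn f \<Longrightarrow> periodic_fn L ((Dv ^^ n) f)"
  by (induction n) (auto intro!: periodic_fn_Dv)

lemma integral_mult_Dv_periodic:
  fixes f g :: "real \<Rightarrow> real"
  assumes L: "L \<ge> 0" and f: "smooth_fn f" "periodic_fn L f" and g: "smooth_fn g" "periodic_fn L g"
  shows "integral {0..L} (\<lambda>x. f x * Dv g x) = - integral {0..L} (\<lambda>x. Dv f x * g x)"
proof -
  have "((\<lambda>x. Dv f x * g x + f x * Dv g x) has_integral f L * g L - f 0 * g 0) {0..L}"
  proof (rule fundamental_theorem_of_calculus[OF L])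
    fix x
    have "((\<lambda>x. f x * g x) has_vector_derivative f x * Dv g x + Dv f x * g x) (at x)"
      using f g by (intro has_vector_derivative_mult has_vector_derivative_Dv) auto
    then show "((\<lambda>x. f x * g x) has_vector_derivative Dv f x * g x + f x * Dv g x) (at x within {0..L})"
      by (simp add: has_vector_derivative_at_within add.commute)
  qed
  moreover have "f L * g L - f 0 * g 0 = 0"
    using f(2) g(2) unfolding periodic_fn_def by (metis add_0 diff_self)
  ultimately have "integral {0..L} (\<lambda>x. Dv f x * g x + f x * Dv g x) = 0"
    by (simp add: integral_unique)
  moreover have "integral {0..L} (\<lambda>x. Dv f x * g x + f x * Dv g x) =
      integral {0..L} (\<lambda>x. Dv f x * g x) + integral {0..L} (\<lambda>x. f x * Dv g x)"
    using f g by (intro integral_add integrable_continuous_interval) auto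
  ultimately show ?thesis by linarith
qed

lemma integral_mult_funpow_Dv_periodic:
  fixes f g :: "real \<Rightarrow> real"
  assumes L: "L \<ge> 0" and f: "smooth_fn f" "periodic_fn L f" and g: "smooth_fn g" "periodic_fn L g"
  shows "integral {0..L} (\<lambda>x. f x * (Dv ^^ j) g x) = (-1) ^ j * integral {0..L} (\<lambda>x. (Dv ^^ j) f x * g x)"
  using f
proof (induction j arbitrary: f)
  case (Suc j)
  have "integral {0..L} (\<lambda>x. f x * (Dv ^^ Suc j) g x) = - integral {0..L} (\<lambda>x. Dv f x * (Dv ^^ j) g x)"
    using Suc.prems g by (simp add: integral_mult_Dv_periodic[OF L] periodic_fn_funpow_Dv)
  also have "\<dots> = (-1) ^ Suc j * integral {0..L} (\<lambda>x. (Dv ^^ Suc j) f x * g x)"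
    using Suc.prems by (simp add: Suc.IH periodic_fn_Dv funpow_Dv_Suc_right del: funpow.simps)
  finally show ?case .
qed simp

section \<open>Local functions and the variational derivative\<close>

lemma tendsto_fun_coordinatewise:
  fixes f :: "'a \<Rightarrow> 'i \<Rightarrow> 'b::topological_space"
  assumes "\<And>i. ((\<lambda>t. f t i) \<longlongrightarrow> g i) F"
  shows "(f \<longlongrightarrow> g) F"
proof (rule topological_tendstoI)
  fix S :: "('i \<Rightarrow> 'b) set"
  assume "open S" "g \<in> S"
  then obtain U where U: "finite {i. U i \<noteq> UNIV}" "\<forall>i. open (U i)" "g \<in> Pi\<^sub>E UNIV U" "Pi\<^sub>E UNIV U \<subseteq> S"
    unfolding open_fun_def openin_product_topology_alt by auto
  have "eventually (\<lambda>t. \<forall>i\<in>{i. U i \<noteq> UNIV}. f t i \<in> U i) F"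
    using assms U(2,3) by (intro eventually_ball_finite[OF U(1)]) (auto intro!: topological_tendstoD)
  then show "eventually (\<lambda>t. f t \<in> S) F"
    by (rule eventually_mono) (use U(4) in \<open>force simp: PiE_iff\<close>)
qed

lemma mean_value_coordinate:
  fixes \<Psi> P :: "('i \<Rightarrow> real) \<Rightarrow> real"
  assumes partial: "\<And>w s. ((\<lambda>s. \<Psi> (w(k := s))) has_real_derivative P (w(k := s))) (at s)"
  shows "\<exists>\<xi>. \<bar>\<xi> - c\<bar> \<le> \<bar>w k - c\<bar> \<and> \<Psi> w - \<Psi> (w(k := c)) = P (w(k := \<xi>)) * (w k - c)"
proof -
  define \<phi> where "\<phi> s = \<Psi> (w(k := s))" for s
  have d: "\<And>s. (\<phi> has_real_derivative P (w(k := s))) (at s)"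
    unfolding \<phi>_def by (rule partial)
  have incr: "\<Psi> w - \<Psi> (w(k := c)) = \<phi> (w k) - \<phi> c"
    unfolding \<phi>_def by simp
  consider "w k = c" | "c < w k" | "w k < c"
    by linarith
  then show ?thesis
  proof cases
    case 1
    then show ?thesis
      by (intro exI[of _ c]) (simp add: incr)
  next
    case 2
    from MVT2[OF 2 d] obtain z where "c < z" "z < w k" "\<phi> (w k) - \<phi> c = (w k - c) * P (w(k := z))"
      by blast
    then show ?thesis
      by (intro exI[of _ z]) (simp add: incr mult.commute)
  next
    case 3
    from MVT2[OF 3 d] obtain z where "w k < z" "z < c" "\<phi> c - \<phi> (w k) = (c - w k) * P (w(k := z))"
      by blast
    then show ?thesis
      by (intro exI[of _ z]) (simp add: incr algebra_simps)
  qed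
qed

text \<open>By the mean value theorem, the increment of \<open>\<Psi>\<close> due to its \<open>k\<close>-th argument alone is
  \<open>P ((W t)(k := \<xi> t)) * (W t k - W t0 k)\<close> with \<open>\<xi> t \<longrightarrow> W t0 k\<close>.\<close>
lemma has_real_derivative_coordinate_increment:
  fixes \<Psi> P :: "('i \<Rightarrow> real) \<Rightarrow> real"
  assumes partial: "\<And>w s. ((\<lambda>s. \<Psi> (w(k := s))) has_real_derivative P (w(k := s))) (at s)"
    and cont: "continuous_on UNIV P"
    and W: "\<And>i. ((\<lambda>t. W t i) has_real_derivative W' i) (at t0)"
  shows "((\<lambda>t. \<Psi> (W t) - \<Psi> ((W t)(k := W t0 k))) has_real_derivative P (W t0) * W' k) (at t0)"
proof -
  define c where "c = W t0 k"
  define R where "R = (\<lambda>t. \<Psi> (W t) - \<Psi> ((W t)(k := c)))"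
  have "\<exists>\<xi>. \<bar>\<xi> - c\<bar> \<le> \<bar>W t k - c\<bar> \<and> R t = P ((W t)(k := \<xi>)) * (W t k - c)" for t
    unfolding R_def by (rule mean_value_coordinate[OF partial])
  then obtain \<xi> where \<xi>: "\<And>t. \<bar>\<xi> t - c\<bar> \<le> \<bar>W t k - c\<bar>" "\<And>t. R t = P ((W t)(k := \<xi> t)) * (W t k - c)"
    by metis
  have W_lim: "((\<lambda>t. W t i) \<longlongrightarrow> W t0 i) (at t0)" for i
    using DERIV_isCont[OF W[of i]] by (simp add: isCont_def)
  have W_k: "((\<lambda>t. W t k - c) \<longlongrightarrow> 0) (at t0)"
    using W_lim[of k] by (simp add: c_def LIM_zero)
  have "((\<lambda>t. \<xi> t - c) \<longlongrightarrow> 0) (at t0)"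
    by (rule Lim_null_comparison[OF _ tendsto_rabs_zero[OF W_k]]) (simp add: \<xi>(1))
  then have \<xi>_lim: "(\<xi> \<longlongrightarrow> W t0 k) (at t0)"
    by (simp add: LIM_zero_iff c_def)
  have "((\<lambda>t. ((W t)(k := \<xi> t)) i) \<longlongrightarrow> W t0 i) (at t0)" for i
    using W_lim[of i] \<xi>_lim by (cases "i = k") simp_all
  then have "((\<lambda>t. (W t)(k := \<xi> t)) \<longlongrightarrow> W t0) (at t0)"
    by (rule tendsto_fun_coordinatewise)
  then have P_lim: "((\<lambda>t. P ((W t)(k := \<xi> t))) \<longlongrightarrow> P (W t0)) (at t0)"
    using continuous_on_tendsto_compose[OF cont] by simp
  have "R t0 = 0"
    by (simp add: R_def c_def)
  then have "(\<lambda>t. (R t - R t0) / (t - t0)) = (\<lambda>t. P ((W t)(k := \<xi> t)) * ((W t k - W t0 k) / (t - t0)))"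
    by (simp add: \<xi>(2) c_def)
  with tendsto_mult[OF P_lim W[of k, unfolded has_field_derivative_iff]]
  have "(R has_real_derivative P (W t0) * W' k) (at t0)"
    by (simp add: has_field_derivative_iff)
  then show ?thesis
    by (simp add: R_def c_def)
qed

lemma continuous_on_fun_upd: "continuous_on UNIV (\<lambda>w :: 'i \<Rightarrow> real. w(k := c))"
proof (intro continuous_on_coordinatewise_then_product)
  fix i
  show "continuous_on UNIV (\<lambda>w :: 'i \<Rightarrow> real. (w(k := c)) i)"
    by (cases "i = k") auto
qed

lemma has_real_derivative_chain_coordinatewise:
  fixes \<Psi> :: "('i \<Rightarrow> real) \<Rightarrow> real" and P :: "'i \<Rightarrow> ('i \<Rightarrow> real) \<Rightarrow> real"
  assumes "finite I"
    and local: "\<And>w w'. (\<forall>i\<in>I. w i = w' i) \<Longrightarrow> \<Psi> w = \<Psi> w'"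
    and partial: "\<And>i w s. i \<in> I \<Longrightarrow> ((\<lambda>s. \<Psi> (w(i := s))) has_real_derivative P i (w(i := s))) (at s)"
    and cont: "\<And>i. i \<in> I \<Longrightarrow> continuous_on UNIV (P i)"
    and W: "\<And>i. ((\<lambda>t. W t i) has_real_derivative W' i) (at t0)"
  shows "((\<lambda>t. \<Psi> (W t)) has_real_derivative (\<Sum>i\<in>I. P i (W t0) * W' i)) (at t0)"
  using \<open>finite I\<close> local partial cont
proof (induction I arbitrary: \<Psi> P rule: finite_induct)
  case empty
  have "(\<lambda>t. \<Psi> (W t)) = (\<lambda>t. \<Psi> (W t0))"
    by (rule ext, rule empty.prems(1)) simp
  then show ?case
    by simp
next
  case (insert k I)
  define c where "c = W t0 k"
  have IH: "((\<lambda>t. \<Psi> ((W t)(k := c))) has_real_derivative (\<Sum>i\<in>I. P i ((W t0)(k := c)) * W' i)) (at t0)"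
  proof (rule insert.IH[where \<Psi> = "\<lambda>w. \<Psi> (w(k := c))" and P = "\<lambda>i w. P i (w(k := c))"])
    show "\<Psi> (w(k := c)) = \<Psi> (w'(k := c))" if "\<forall>i\<in>I. w i = w' i" for w w'
      using that by (intro insert.prems(1)) simp
    show "((\<lambda>s. \<Psi> ((w(i := s))(k := c))) has_real_derivative P i ((w(i := s))(k := c))) (at s)"
      if "i \<in> I" for i w s
    proof -
      have "i \<noteq> k"
        using that insert.hyps(2) by blast
      then have twist: "\<And>s. (w(i := s))(k := c) = (w(k := c))(i := s)"
        by (rule fun_upd_twist)
      show ?thesis
        unfolding twist using that by (intro insert.prems(2)) simp
    qed
    show "continuous_on UNIV (\<lambda>w. P i (w(k := c)))" if "i \<in> I" for i
      using that by (intro continuous_on_compose2[OF insert.prems(3) continuous_on_fun_upd]) simp_all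
  qed
  have "((\<lambda>t. \<Psi> (W t) - \<Psi> ((W t)(k := c))) has_real_derivative P k (W t0) * W' k) (at t0)"
    unfolding c_def
    by (rule has_real_derivative_coordinate_increment[OF insert.prems(2)[OF insertI1] insert.prems(3)[OF insertI1] W])
  from DERIV_add[OF IH this] show ?case
    using insert.hyps by (simp add: c_def add.commute)
qed

definition jet_local :: "nat \<Rightarrow> jetfn \<Rightarrow> bool" where
  "jet_local N F \<longleftrightarrow> (\<forall>u u' v v'. (\<forall>j<N. u j = u' j \<and> v j = v' j) \<longrightarrow> F u v = F u' v')"

lemma local_fn_jet_local: "local_fn N F \<Longrightarrow> jet_local N F"
  unfolding local_fn_def jet_local_def by blast

lemma jet_local_pd1:
  assumes "jet_local N F"
  shows "jet_local N (pd1 j F)"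
  unfolding jet_local_def
proof (intro allI impI)
  fix u u' v v' :: "nat \<Rightarrow> real"
  assume eq: "\<forall>i<N. u i = u' i \<and> v i = v' i"
  have loc: "F w z = F w' z'" if "\<forall>i<N. w i = w' i \<and> z i = z' i" for w w' z z'
    using assms that unfolding jet_local_def by blast
  show "pd1 j F u v = pd1 j F u' v'"
  proof (cases "j < N")
    case True
    have "(\<lambda>s. F (u(j := s)) v) = (\<lambda>s. F (u'(j := s)) v')"
      using eq by (intro ext loc) auto
    with True eq show ?thesis
      by (simp add: pd1_def)
  next
    case False
    have "(\<lambda>s. F (u(j := s)) v) = (\<lambda>s. F u' v')" "(\<lambda>s. F (u'(j := s)) v') = (\<lambda>s. F u' v')"
      using eq False by (intro ext loc; auto)+
    then show ?thesis
      by (simp add: pd1_def)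
  qed
qed

lemma jet_local_pd2:
  assumes "jet_local N F"
  shows "jet_local N (pd2 j F)"
  unfolding jet_local_def
proof (intro allI impI)
  fix u u' v v' :: "nat \<Rightarrow> real"
  assume eq: "\<forall>i<N. u i = u' i \<and> v i = v' i"
  have loc: "F w z = F w' z'" if "\<forall>i<N. w i = w' i \<and> z i = z' i" for w w' z z'
    using assms that unfolding jet_local_def by blast
  show "pd2 j F u v = pd2 j F u' v'"
  proof (cases "j < N")
    case True
    have "(\<lambda>s. F u (v(j := s))) = (\<lambda>s. F u' (v'(j := s)))"
      using eq by (intro ext loc) auto
    with True eq show ?thesis
      by (simp add: pd2_def)
  next
    case False
    have "(\<lambda>s. F u (v(j := s))) = (\<lambda>s. F u' v')" "(\<lambda>s. F u' (v'(j := s))) = (\<lambda>s. F u' v')"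
      using eq False by (intro ext loc; auto)+
    then show ?thesis
      by (simp add: pd2_def)
  qed
qed

lemma pds_append: "pds ws' (pds ws F) = pds (ws' @ ws) F"
proof (induction ws')
  case (Cons w ws')
  then show ?case
    by (cases w) auto
qed simp

lemma local_fn_pd1: "local_fn N F \<Longrightarrow> local_fn N (pd1 j F)"
proof -
  assume F: "local_fn N F"
  have "pds ws (pd1 j F) = pds (ws @ [(True, j)]) F" for ws
    by (simp flip: pds_append)
  with F jet_local_pd1[OF local_fn_jet_local[OF F]] show ?thesis
    unfolding local_fn_def jet_local_def by simp
qed

lemma local_fn_pd2: "local_fn N F \<Longrightarrow> local_fn N (pd2 j F)"
proof -
  assume F: "local_fn N F"
  have "pds ws (pd2 j F) = pds (ws @ [(False, j)]) F" for ws
    by (simp flip: pds_append)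
  with F jet_local_pd2[OF local_fn_jet_local[OF F]] show ?thesis
    unfolding local_fn_def jet_local_def by simp
qed

lemma local_fn_has_real_derivative_pd1:
  assumes "local_fn N F"
  shows "((\<lambda>s. F (u(j := s)) v) has_real_derivative pd1 j F (u(j := s)) v) (at s)"
proof -
  have "(\<lambda>s'. F ((u(j := s))(j := s')) v) differentiable at ((u(j := s)) j)"
    using assms unfolding local_fn_def by (metis pds.simps(1))
  then show ?thesis
    unfolding pd1_def by (simp add: DERIV_deriv_iff_real_differentiable)
qed

lemma local_fn_has_real_derivative_pd2:
  assumes "local_fn N F"
  shows "((\<lambda>s. F u (v(j := s))) has_real_derivative pd2 j F u (v(j := s))) (at s)"
proof -
  have "(\<lambda>s'. F u ((v(j := s))(j := s'))) differentiable at ((v(j := s)) j)"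
    using assms unfolding local_fn_def by (metis pds.simps(1))
  then show ?thesis
    unfolding pd2_def by (simp add: DERIV_deriv_iff_real_differentiable)
qed

lemma local_fn_continuous_on: "local_fn N F \<Longrightarrow> continuous_on UNIV (\<lambda>p. F (fst p) (snd p))"
  unfolding local_fn_def by (metis pds.simps(1))

text \<open>The two jets are merged into one function on \<open>bool \<times> nat\<close>, so that the coordinatewise chain
  rule applies.\<close>
lemma local_fn_chain_rule:
  assumes F: "local_fn N F"
    and U: "\<And>j. ((\<lambda>t. U t j) has_real_derivative U' j) (at t0)"
    and V: "\<And>j. ((\<lambda>t. V t j) has_real_derivative V' j) (at t0)"
  shows "((\<lambda>t. F (U t) (V t)) has_real_derivative
     (\<Sum>j<N. pd1 j F (U t0) (V t0) * U' j + pd2 j F (U t0) (V t0) * V' j)) (at t0)"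
proof -
  define w1 :: "(bool \<times> nat \<Rightarrow> real) \<Rightarrow> nat \<Rightarrow> real" where "w1 w = (\<lambda>j. w (True, j))" for w
  define w2 :: "(bool \<times> nat \<Rightarrow> real) \<Rightarrow> nat \<Rightarrow> real" where "w2 w = (\<lambda>j. w (False, j))" for w
  define P where "P = (\<lambda>(b, j) w. if b then pd1 j F (w1 w) (w2 w) else pd2 j F (w1 w) (w2 w))"
  define W where "W t = (\<lambda>(b, j). if b then U t j else V t j)" for t
  define W' where "W' = (\<lambda>(b, j). if b then U' j else V' j)"
  have upd: "w1 (w((True, j) := s)) = (w1 w)(j := s)" "w2 (w((True, j) := s)) = w2 w"
    "w1 (w((False, j) := s)) = w1 w" "w2 (w((False, j) := s)) = (w2 w)(j := s)" for w j s
    by (auto simp: w1_def w2_def)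
  have cont_w: "continuous_on UNIV (\<lambda>w. (w1 w, w2 w))"
    unfolding w1_def w2_def by (intro continuous_on_Pair continuous_on_coordinatewise_then_product) auto
  have "((\<lambda>t. F (w1 (W t)) (w2 (W t))) has_real_derivative (\<Sum>i\<in>UNIV \<times> {..<N}. P i (W t0) * W' i)) (at t0)"
  proof (rule has_real_derivative_chain_coordinatewise)
    show "F (w1 w) (w2 w) = F (w1 w') (w2 w')" if "\<forall>i\<in>UNIV \<times> {..<N}. w i = w' i" for w w'
      using local_fn_jet_local[OF F] that unfolding jet_local_def w1_def w2_def by auto
    show "((\<lambda>s. F (w1 (w(i := s))) (w2 (w(i := s)))) has_real_derivative P i (w(i := s))) (at s)" for i w s
      using local_fn_has_real_derivative_pd1[OF F] local_fn_has_real_derivative_pd2[OF F]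
      by (cases i) (auto simp: P_def upd)
    show "continuous_on UNIV (P i)" for i
    proof (cases i)
      case (Pair b j)
      then show ?thesis
        using continuous_on_compose2[OF local_fn_continuous_on[OF local_fn_pd1[OF F]] cont_w]
          continuous_on_compose2[OF local_fn_continuous_on[OF local_fn_pd2[OF F]] cont_w]
        by (cases b) (auto simp: P_def)
    qed
    show "((\<lambda>t. W t i) has_real_derivative W' i) (at t0)" for i
      using U V by (cases i) (auto simp: W_def W'_def)
  qed simp
  moreover have "w1 (W t) = U t" "w2 (W t) = V t" for t
    by (auto simp: w1_def w2_def W_def)
  moreover have "(\<Sum>i\<in>UNIV \<times> {..<N}. P i (W t0) * W' i) =
      (\<Sum>b\<in>UNIV. \<Sum>j<N. P (b, j) (W t0) * W' (b, j))"
    by (simp add: sum.cartesian_product)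
  moreover have "\<dots> = (\<Sum>j<N. pd1 j F (U t0) (V t0) * U' j + pd2 j F (U t0) (V t0) * V' j)"
    by (simp add: UNIV_bool sum.distrib P_def W'_def calculation(2,3))
  ultimately show ?thesis
    by simp
qed

lemma has_real_derivative_jet: "smooth_fn k \<Longrightarrow> ((\<lambda>y. jet k y j) has_real_derivative jet k y (Suc j)) (at y)"
  unfolding jet_def by (simp add: has_real_derivative_Dv)

lemma has_real_derivative_local_fn_jet:
  assumes "local_fn N F" "smooth_fn k1" "smooth_fn k2"
  shows "((\<lambda>y. F (jet k1 y) (jet k2 y)) has_real_derivative
     (\<Sum>j<N. pd1 j F (jet k1 y) (jet k2 y) * jet k1 y (Suc j) + pd2 j F (jet k1 y) (jet k2 y) * jet k2 y (Suc j))) (at y)"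
  using assms by (intro local_fn_chain_rule has_real_derivative_jet)

lemma Dv_local_fn_jet:
  assumes "local_fn N F" "smooth_fn k1" "smooth_fn k2"
  shows "Dv (\<lambda>y. F (jet k1 y) (jet k2 y)) =
    (\<lambda>y. \<Sum>j<N. pd1 j F (jet k1 y) (jet k2 y) * jet k1 y (Suc j) + pd2 j F (jet k1 y) (jet k2 y) * jet k2 y (Suc j))"
  by (rule ext, rule Dv_eqI_real, rule has_real_derivative_local_fn_jet[OF assms])

lemma smooth_fn_local_fn_jet:
  assumes "local_fn N F" "smooth_fn k1" "smooth_fn k2"
  shows "smooth_fn (\<lambda>y. F (jet k1 y) (jet k2 y))"
proof -
  have "\<forall>F. local_fn N F \<longrightarrow> smooth_upto n (\<lambda>y. F (jet k1 y) (jet k2 y))" for n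
  proof (induction n)
    case 0
    show ?case
      using has_real_derivative_local_fn_jet[OF _ assms(2,3)] by (auto simp: smooth_upto_0 real_differentiable_def)
  next
    case (Suc n)
    show ?case
    proof (intro allI impI)
      fix F
      assume F: "local_fn N F"
      have "smooth_fn (\<lambda>y. jet k y (Suc j))" if "smooth_fn k" for k j
        using that by (simp add: jet_def)
      then have jets: "smooth_upto n (\<lambda>y. jet k y (Suc j))" if "smooth_fn k" for k j
        using that by (simp add: smooth_fn_iff_smooth_upto)
      show "smooth_upto (Suc n) (\<lambda>y. F (jet k1 y) (jet k2 y))"
        unfolding smooth_upto_Suc Dv_local_fn_jet[OF F assms(2,3)]
        using has_real_derivative_local_fn_jet[OF F assms(2,3)] Suc.IH local_fn_pd1[OF F] local_fn_pd2[OF F]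
          jets assms(2,3)
        by (auto simp: real_differentiable_def
            intro!: smooth_upto_sum smooth_upto_add bounded_bilinear.smooth_upto_prod[OF bounded_bilinear_mult])
    qed
  qed
  with assms(1) show ?thesis
    by (simp add: smooth_fn_iff_smooth_upto)
qed

lemma smooth_fn_E1: "local_fn N g \<Longrightarrow> smooth_fn k1 \<Longrightarrow> smooth_fn k2 \<Longrightarrow> smooth_fn (E1 N g k1 k2)"
  unfolding E1_def
  by (intro smooth_fn_sum smooth_fn_mult smooth_fn_const smooth_fn_funpow_Dv smooth_fn_local_fn_jet local_fn_pd1)

lemma smooth_fn_E2: "local_fn N g \<Longrightarrow> smooth_fn k1 \<Longrightarrow> smooth_fn k2 \<Longrightarrow> smooth_fn (E2 N g k1 k2)"
  unfolding E2_def
  by (intro smooth_fn_sum smooth_fn_mult smooth_fn_const smooth_fn_funpow_Dv smooth_fn_local_fn_jet local_fn_pd2)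

lemma periodic_fn_jet:
  assumes "periodic_fn L k" "smooth_fn k"
  shows "jet k (x + L) = jet k x"
  using periodic_fn_funpow_Dv[OF assms] by (simp add: jet_def periodic_fn_def)

lemma periodic_fn_local_fn_jet:
  "periodic_fn L k1 \<Longrightarrow> smooth_fn k1 \<Longrightarrow> periodic_fn L k2 \<Longrightarrow> smooth_fn k2 \<Longrightarrow>
   periodic_fn L (\<lambda>y. F (jet k1 y) (jet k2 y))"
  by (simp add: periodic_fn_def periodic_fn_jet)

lemma integral_sum_mult_funpow_Dv_periodic:
  fixes c :: "nat \<Rightarrow> real \<Rightarrow> real" and d :: "real \<Rightarrow> real"
  assumes L: "L \<ge> 0" and c: "\<And>j. smooth_fn (c j)" "\<And>j. periodic_fn L (c j)"
    and d: "smooth_fn d" "periodic_fn L d"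
  shows "integral {0..L} (\<lambda>x. \<Sum>j<N. c j x * (Dv ^^ j) d x) =
         integral {0..L} (\<lambda>x. (\<Sum>j<N. (-1) ^ j * (Dv ^^ j) (c j) x) * d x)"
proof -
  have int: "(\<lambda>x. f x * g x) integrable_on {0..L}" if "smooth_fn f" "smooth_fn g" for f g :: "real \<Rightarrow> real"
    using that by (intro integrable_continuous_interval) simp
  have "integral {0..L} (\<lambda>x. \<Sum>j<N. c j x * (Dv ^^ j) d x) =
        (\<Sum>j<N. integral {0..L} (\<lambda>x. c j x * (Dv ^^ j) d x))"
    using c d by (intro integral_sum int) auto
  also have "\<dots> = (\<Sum>j<N. integral {0..L} (\<lambda>x. (-1) ^ j * (Dv ^^ j) (c j) x * d x))"
    using c d by (simp add: integral_mult_funpow_Dv_periodic[OF L] mult.assoc)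
  also have "\<dots> = integral {0..L} (\<lambda>x. (\<Sum>j<N. (-1) ^ j * (Dv ^^ j) (c j) x) * d x)"
    using c d by (simp add: sum_distrib_right integral_sum int)
  finally show ?thesis .
qed

lemma integral_linearization_eq_E:
  assumes L: "L \<ge> 0" and h: "local_fn N h"
    and k: "smooth_fn k1" "periodic_fn L k1" "smooth_fn k2" "periodic_fn L k2"
    and d: "smooth_fn d1" "periodic_fn L d1" "smooth_fn d2" "periodic_fn L d2"
  shows "integral {0..L} (\<lambda>x. \<Sum>j<N. pd1 j h (jet k1 x) (jet k2 x) * (Dv ^^ j) d1 x
                                     + pd2 j h (jet k1 x) (jet k2 x) * (Dv ^^ j) d2 x)
       = integral {0..L} (\<lambda>x. E1 N h k1 k2 x * d1 x + E2 N h k1 k2 x * d2 x)"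
proof -
  define c1 where "c1 = (\<lambda>j y. pd1 j h (jet k1 y) (jet k2 y))"
  define c2 where "c2 = (\<lambda>j y. pd2 j h (jet k1 y) (jet k2 y))"
  have c: "smooth_fn (c1 j)" "periodic_fn L (c1 j)" "smooth_fn (c2 j)" "periodic_fn L (c2 j)" for j
    unfolding c1_def c2_def using k
    by (auto intro!: smooth_fn_local_fn_jet local_fn_pd1 local_fn_pd2 h periodic_fn_local_fn_jet)
  have int: "(\<lambda>x. \<Sum>j<N. c j x * (Dv ^^ j) d x) integrable_on {0..L}"
    if "\<And>j. smooth_fn (c j)" "smooth_fn d" for c :: "nat \<Rightarrow> real \<Rightarrow> real" and d
    using that by (intro integrable_continuous_interval smooth_fn_continuous_on) simp
  have "integral {0..L} (\<lambda>x. \<Sum>j<N. c1 j x * (Dv ^^ j) d1 x + c2 j x * (Dv ^^ j) d2 x)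
      = integral {0..L} (\<lambda>x. \<Sum>j<N. c1 j x * (Dv ^^ j) d1 x)
        + integral {0..L} (\<lambda>x. \<Sum>j<N. c2 j x * (Dv ^^ j) d2 x)"
    using c d by (simp add: sum.distrib integral_add int)
  also have "\<dots> = integral {0..L} (\<lambda>x. E1 N h k1 k2 x * d1 x) + integral {0..L} (\<lambda>x. E2 N h k1 k2 x * d2 x)"
    using integral_sum_mult_funpow_Dv_periodic[OF L, of c1 d1] integral_sum_mult_funpow_Dv_periodic[OF L, of c2 d2] c d
    by (simp add: E1_def E2_def c1_def c2_def)
  also have "\<dots> = integral {0..L} (\<lambda>x. E1 N h k1 k2 x * d1 x + E2 N h k1 k2 x * d2 x)"
    using d h k by (intro integral_add[symmetric] integrable_continuous_interval) (simp_all add: smooth_fn_E1 smooth_fn_E2)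
  finally show ?thesis
    by (simp add: c1_def c2_def)
qed

section \<open>Two-parameter families\<close>

definition regular2 :: "(real \<Rightarrow> real \<Rightarrow> 'a::real_normed_vector) \<Rightarrow> bool" where
  "regular2 G \<longleftrightarrow> (\<forall>t x. (\<lambda>s. G s x) differentiable at t) \<and> (\<forall>t x. G t differentiable at x) \<and>
     continuous_on UNIV (\<lambda>p. G (fst p) (snd p))"

lemma has_vector_derivative_Dt: "regular2 G \<Longrightarrow> ((\<lambda>s. G s x) has_vector_derivative Dt G t x) (at t)"
  unfolding regular2_def Dt_def by (simp add: vector_derivative_works[symmetric])

lemma has_vector_derivative_Dx: "regular2 G \<Longrightarrow> (G t has_vector_derivative Dx G t x) (at x)"
  unfolding regular2_def Dx_def by (simp add: vector_derivative_works[symmetric])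

lemma has_real_derivative_Dt: "regular2 (G :: real \<Rightarrow> real \<Rightarrow> real) \<Longrightarrow> ((\<lambda>s. G s x) has_real_derivative Dt G t x) (at t)"
  using has_vector_derivative_Dt has_real_derivative_iff_has_vector_derivative by blast

lemma Dt_eqI: "((\<lambda>s. G s x) has_vector_derivative d) (at t) \<Longrightarrow> Dt G t x = d"
  unfolding Dt_def by (rule vector_derivative_at)

lemma Dx_eqI: "(G t has_vector_derivative d) (at x) \<Longrightarrow> Dx G t x = d"
  unfolding Dx_def by (rule vector_derivative_at)

lemma Dt_eqI_real: "((\<lambda>s. G s x) has_real_derivative d) (at t) \<Longrightarrow> Dt G t x = (d :: real)"
  by (rule Dt_eqI) (simp add: has_real_derivative_iff_has_vector_derivative)

lemma Dx_eq_Dv: "Dx G t = Dv (G t)"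
  by (simp add: Dx_def Dv_def fun_eq_iff)

lemma pds2_replicate_False: "pds2 (replicate n False) G t = (Dv ^^ n) (G t)"
  by (induction n) (auto simp: Dx_eq_Dv)

lemma regular2_continuous_on_slice: "regular2 G \<Longrightarrow> continuous_on S (G t)"
  unfolding regular2_def
  by (intro continuous_at_imp_continuous_on ballI differentiable_imp_continuous_within) blast

lemma regular2_add: "regular2 F \<Longrightarrow> regular2 G \<Longrightarrow> regular2 (\<lambda>t x. F t x + G t x)"
  unfolding regular2_def by (auto intro!: continuous_on_add)

lemma regular2_minus: "regular2 F \<Longrightarrow> regular2 (\<lambda>t x. - F t x)"
  unfolding regular2_def by (auto intro!: continuous_on_minus)

lemma (in bounded_bilinear) regular2_prod: "regular2 F \<Longrightarrow> regular2 G \<Longrightarrow> regular2 (\<lambda>t x. prod (F t x) (G t x))"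
  unfolding regular2_def
  by (auto intro!: differentiable_prod continuous_on continuous_on_compose2[of UNIV])

lemma (in bounded_linear) differentiable_compose_at:
  "(g :: real \<Rightarrow> 'a) differentiable at x \<Longrightarrow> (\<lambda>y. f (g y)) differentiable at x"
  using has_vector_derivative[OF has_vector_derivative_Dv] by (auto intro: differentiableI_vector)

lemma (in bounded_linear) regular2_compose: "regular2 G \<Longrightarrow> regular2 (\<lambda>t x. f (G t x))"
  unfolding regular2_def by (auto intro!: differentiable_compose_at continuous_on)

lemma Dt_add: "regular2 F \<Longrightarrow> regular2 G \<Longrightarrow> Dt (\<lambda>t x. F t x + G t x) = (\<lambda>t x. Dt F t x + Dt G t x)"
  by (intro ext Dt_eqI has_vector_derivative_add has_vector_derivative_Dt)

lemma Dx_add: "regular2 F \<Longrightarrow> regular2 G \<Longrightarrow> Dx (\<lambda>t x. F t x + G t x) = (\<lambda>t x. Dx F t x + Dx G t x)"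
  by (intro ext Dx_eqI has_vector_derivative_add has_vector_derivative_Dx)

lemma Dt_minus: "regular2 F \<Longrightarrow> Dt (\<lambda>t x. - F t x) = (\<lambda>t x. - Dt F t x)"
  by (intro ext Dt_eqI has_vector_derivative_minus has_vector_derivative_Dt)

lemma Dx_minus: "regular2 F \<Longrightarrow> Dx (\<lambda>t x. - F t x) = (\<lambda>t x. - Dx F t x)"
  by (intro ext Dx_eqI has_vector_derivative_minus has_vector_derivative_Dx)

lemma (in bounded_bilinear) Dt_prod:
  "regular2 F \<Longrightarrow> regular2 G \<Longrightarrow>
   Dt (\<lambda>t x. prod (F t x) (G t x)) = (\<lambda>t x. prod (Dt F t x) (G t x) + prod (F t x) (Dt G t x))"
  by (intro ext Dt_eqI, subst add.commute) (intro has_vector_derivative has_vector_derivative_Dt)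

lemma (in bounded_bilinear) Dx_prod:
  "regular2 F \<Longrightarrow> regular2 G \<Longrightarrow>
   Dx (\<lambda>t x. prod (F t x) (G t x)) = (\<lambda>t x. prod (Dx F t x) (G t x) + prod (F t x) (Dx G t x))"
  by (intro ext Dx_eqI, subst add.commute) (intro has_vector_derivative has_vector_derivative_Dx)

lemma (in bounded_linear) Dt_compose: "regular2 G \<Longrightarrow> Dt (\<lambda>t x. f (G t x)) = (\<lambda>t x. f (Dt G t x))"
  by (intro ext Dt_eqI has_vector_derivative has_vector_derivative_Dt)

lemma (in bounded_linear) Dx_compose: "regular2 G \<Longrightarrow> Dx (\<lambda>t x. f (G t x)) = (\<lambda>t x. f (Dx G t x))"
  by (intro ext Dx_eqI has_vector_derivative has_vector_derivative_Dx)

definition smooth2_upto :: "nat \<Rightarrow> (real \<Rightarrow> real \<Rightarrow> 'a::real_normed_vector) \<Rightarrow> bool" where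
  "smooth2_upto n G \<longleftrightarrow> (\<forall>ws. length ws \<le> n \<longrightarrow> regular2 (pds2 ws G))"

lemma pds2_append: "pds2 ws' (pds2 ws F) = pds2 (ws' @ ws) F"
  by (induction ws') auto

lemma smooth2_upto_0: "smooth2_upto 0 G \<longleftrightarrow> regular2 G"
  unfolding smooth2_upto_def by auto

lemma smooth2_upto_Suc:
  "smooth2_upto (Suc n) G \<longleftrightarrow> regular2 G \<and> smooth2_upto n (Dt G) \<and> smooth2_upto n (Dx G)"
proof -
  have Dt: "pds2 ws (Dt G) = pds2 (ws @ [True]) G" and Dx: "pds2 ws (Dx G) = pds2 (ws @ [False]) G" for ws
    by (simp_all flip: pds2_append)
  show ?thesis
  proof
    assume G: "smooth2_upto (Suc n) G"
    then have "regular2 (pds2 [] G)"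
      unfolding smooth2_upto_def by (metis le0 list.size(3))
    with G show "regular2 G \<and> smooth2_upto n (Dt G) \<and> smooth2_upto n (Dx G)"
      unfolding smooth2_upto_def Dt Dx by simp
  next
    assume G: "regular2 G \<and> smooth2_upto n (Dt G) \<and> smooth2_upto n (Dx G)"
    show "smooth2_upto (Suc n) G"
      unfolding smooth2_upto_def
    proof (intro allI impI)
      fix ws :: "bool list"
      assume "length ws \<le> Suc n"
      then show "regular2 (pds2 ws G)"
      proof (cases ws rule: rev_cases)
        case (snoc ws' b)
        with G \<open>length ws \<le> Suc n\<close> show ?thesis
          unfolding smooth2_upto_def Dt Dx by (cases b) auto
      qed (use G in simp)
    qed
  qed
qed

lemma smooth2_iff_regular2: "smooth2 G \<longleftrightarrow> (\<forall>ws. regular2 (pds2 ws G))"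
  unfolding smooth2_def regular2_def ..

lemma smooth2_iff_smooth2_upto: "smooth2 G \<longleftrightarrow> (\<forall>n. smooth2_upto n G)"
  unfolding smooth2_iff_regular2 smooth2_upto_def using le_refl by blast

lemma smooth2_iff: "smooth2 G \<longleftrightarrow> regular2 G \<and> smooth2 (Dt G) \<and> smooth2 (Dx G)"
proof -
  have "(\<forall>n. smooth2_upto n G) \<longleftrightarrow> smooth2_upto 0 G \<and> (\<forall>n. smooth2_upto (Suc n) G)"
    by (metis not0_implies_Suc)
  then show ?thesis
    unfolding smooth2_iff_smooth2_upto smooth2_upto_0 smooth2_upto_Suc by blast
qed

lemma smooth2_regular2: "smooth2 G \<Longrightarrow> regular2 G"
  using smooth2_iff by blast

lemma smooth2_Dt: "smooth2 G \<Longrightarrow> smooth2 (Dt G)"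
  using smooth2_iff by blast

lemma smooth2_Dx: "smooth2 G \<Longrightarrow> smooth2 (Dx G)"
  using smooth2_iff by blast

lemma smooth2_pds2: "smooth2 G \<Longrightarrow> smooth2 (pds2 ws G)"
  by (induction ws) (auto intro: smooth2_Dt smooth2_Dx)

lemma smooth2_slice:
  assumes "smooth2 G"
  shows "smooth_fn (G t)"
  unfolding smooth_fn_def
proof (intro allI)
  fix n x
  have "regular2 (pds2 (replicate n False) G)"
    using assms by (intro smooth2_regular2 smooth2_pds2)
  then show "(Dv ^^ n) (G t) differentiable at x"
    unfolding regular2_def pds2_replicate_False by blast
qed

lemma smooth2_upto_add: "smooth2_upto n F \<Longrightarrow> smooth2_upto n G \<Longrightarrow> smooth2_upto n (\<lambda>t x. F t x + G t x)"
proof (induction n arbitrary: F G)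
  case (Suc n)
  then have "regular2 F" "regular2 G"
    by (auto simp: smooth2_upto_Suc)
  with Suc show ?case
    by (auto simp: smooth2_upto_Suc regular2_add Dt_add Dx_add)
qed (simp add: smooth2_upto_0 regular2_add)

lemma smooth2_upto_minus: "smooth2_upto n F \<Longrightarrow> smooth2_upto n (\<lambda>t x. - F t x)"
proof (induction n arbitrary: F)
  case (Suc n)
  then have "regular2 F"
    by (auto simp: smooth2_upto_Suc)
  with Suc show ?case
    by (auto simp: smooth2_upto_Suc regular2_minus Dt_minus Dx_minus)
qed (simp add: smooth2_upto_0 regular2_minus)

lemma (in bounded_bilinear) smooth2_upto_prod:
  "smooth2_upto n F \<Longrightarrow> smooth2_upto n G \<Longrightarrow> smooth2_upto n (\<lambda>t x. prod (F t x) (G t x))"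
proof (induction n arbitrary: F G)
  case (Suc n)
  then have reg: "regular2 F" "regular2 G"
    by (auto simp: smooth2_upto_Suc)
  have "smooth2_upto n F" "smooth2_upto n G"
    using Suc.prems unfolding smooth2_upto_def by auto
  with Suc reg show ?case
    by (auto simp: smooth2_upto_Suc regular2_prod Dt_prod Dx_prod intro!: smooth2_upto_add)
qed (simp add: smooth2_upto_0 regular2_prod)

lemma (in bounded_linear) smooth2_upto_compose: "smooth2_upto n G \<Longrightarrow> smooth2_upto n (\<lambda>t x. f (G t x))"
proof (induction n arbitrary: G)
  case (Suc n)
  then have "regular2 G"
    by (auto simp: smooth2_upto_Suc)
  with Suc show ?case
    by (auto simp: smooth2_upto_Suc regular2_compose Dt_compose Dx_compose)
qed (simp add: smooth2_upto_0 regular2_compose)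

lemma smooth2_add: "smooth2 F \<Longrightarrow> smooth2 G \<Longrightarrow> smooth2 (\<lambda>t x. F t x + G t x)"
  by (simp add: smooth2_iff_smooth2_upto smooth2_upto_add)

lemma smooth2_diff: "smooth2 F \<Longrightarrow> smooth2 G \<Longrightarrow> smooth2 (\<lambda>t x. F t x - G t x)"
  using smooth2_add[of F "\<lambda>t x. - G t x"] by (simp add: smooth2_iff_smooth2_upto smooth2_upto_minus)

lemma (in bounded_bilinear) smooth2_prod: "smooth2 F \<Longrightarrow> smooth2 G \<Longrightarrow> smooth2 (\<lambda>t x. prod (F t x) (G t x))"
  by (simp add: smooth2_iff_smooth2_upto smooth2_upto_prod)

lemma (in bounded_linear) smooth2_compose: "smooth2 G \<Longrightarrow> smooth2 (\<lambda>t x. f (G t x))"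
  by (simp add: smooth2_iff_smooth2_upto smooth2_upto_compose)

lemmas smooth2_mult = bounded_bilinear.smooth2_prod[OF bounded_bilinear_mult]

text \<open>Differentiating the fundamental theorem of calculus under the integral sign
  gives \<open>\<partial>\<^sub>t F t y = \<partial>\<^sub>t F t a + \<integral>\<^sub>a\<^sup>y \<partial>\<^sub>t \<partial>\<^sub>x F t\<close>, whose \<open>y\<close>-derivative is \<open>\<partial>\<^sub>t \<partial>\<^sub>x F t y\<close>.\<close>
lemma Dt_Dx_commute:
  fixes F :: "real \<Rightarrow> real \<Rightarrow> 'a::banach"
  assumes F: "smooth2 F"
  shows "Dt (Dx F) t x = Dx (Dt F) t x"
proof -
  define a where "a = x - 1"
  define b where "b = x + 1"
  have reg: "regular2 F" "regular2 (Dx F)" "regular2 (Dt (Dx F))"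
    using F by (auto intro!: smooth2_regular2 smooth2_Dx smooth2_Dt)
  have "((\<lambda>s. integral (cbox a y) (Dx F s)) has_vector_derivative integral (cbox a y) (Dt (Dx F) t))
          (at t within UNIV)" for y
  proof (rule leibniz_rule_vector_derivative)
    show "continuous_on (UNIV \<times> cbox a y) (\<lambda>(s, z). Dt (Dx F) s z)"
      using reg(3) unfolding regular2_def by (auto intro: continuous_on_subset simp: split_beta')
  qed (use reg in \<open>auto intro!: has_vector_derivative_Dt integrable_continuous_interval regular2_continuous_on_slice
        simp: cbox_interval\<close>)
  then have leibniz: "((\<lambda>s. integral {a..y} (Dx F s)) has_vector_derivative integral {a..y} (Dt (Dx F) t)) (at t)"
    for y
    by (simp add: cbox_interval)
  have Dt_F: "Dt F t y = Dt F t a + integral {a..y} (Dt (Dx F) t)" if "a \<le> y" for y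
  proof (rule Dt_eqI)
    have "(Dx F s has_integral F s y - F s a) {a..y}" for s
      using that reg(1)
      by (intro fundamental_theorem_of_calculus) (auto intro!: has_vector_derivative_at_within has_vector_derivative_Dx)
    then have "integral {a..y} (Dx F s) = F s y - F s a" for s
      by (rule integral_unique)
    then have "(\<lambda>s. F s y) = (\<lambda>s. F s a + integral {a..y} (Dx F s))"
      by simp
    then show "((\<lambda>s. F s y) has_vector_derivative Dt F t a + integral {a..y} (Dt (Dx F) t)) (at t)"
      using reg(1) by (simp add: has_vector_derivative_add has_vector_derivative_Dt leibniz)
  qed
  have "((\<lambda>y. integral {a..y} (Dt (Dx F) t)) has_vector_derivative Dt (Dx F) t x) (at x within {a..b})"
    using reg(3) by (intro integral_has_vector_derivative regular2_continuous_on_slice) (auto simp: a_def b_def)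
  moreover have "at x within {a..b} = at x"
    by (rule at_within_Icc_at) (auto simp: a_def b_def)
  ultimately have "((\<lambda>y. Dt F t a + integral {a..y} (Dt (Dx F) t)) has_vector_derivative Dt (Dx F) t x) (at x)"
    using has_vector_derivative_add[OF has_vector_derivative_const] by fastforce
  then have "(Dt F t has_vector_derivative Dt (Dx F) t x) (at x)"
  proof (rule has_vector_derivative_transform_within_open[OF _ open_greaterThanLessThan])
    show "x \<in> {a<..<b}"
      by (simp add: a_def b_def)
    show "Dt F t a + integral {a..y} (Dt (Dx F) t) = Dt F t y" if "y \<in> {a<..<b}" for y
      using Dt_F[of y] that by simp
  qed
  then show ?thesis
    by (rule Dx_eqI[symmetric])
qed

lemma Dt_funpow_Dx_commute:
  fixes F :: "real \<Rightarrow> real \<Rightarrow> 'a::banach"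
  assumes "smooth2 F"
  shows "Dt (pds2 (replicate n False) F) = pds2 (replicate n False) (Dt F)"
proof (induction n)
  case (Suc n)
  have "Dt (Dx (pds2 (replicate n False) F)) = Dx (Dt (pds2 (replicate n False) F))"
    using assms by (intro ext Dt_Dx_commute smooth2_pds2)
  with Suc show ?case
    by simp
qed simp

lemma has_vector_derivative_funpow_Dv_family:
  fixes \<Gamma> :: "real \<Rightarrow> real \<Rightarrow> 'a::banach"
  assumes "smooth2 \<Gamma>"
  shows "((\<lambda>s. (Dv ^^ n) (\<Gamma> s) x) has_vector_derivative (Dv ^^ n) (Dt \<Gamma> t) x) (at t)"
proof -
  have "((\<lambda>s. pds2 (replicate n False) \<Gamma> s x) has_vector_derivative Dt (pds2 (replicate n False) \<Gamma>) t x) (at t)"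
    using assms by (intro has_vector_derivative_Dt smooth2_regular2 smooth2_pds2)
  then show ?thesis
    using assms by (simp add: Dt_funpow_Dx_commute pds2_replicate_False)
qed

lemma periodic_fn_Dt: "(\<And>t. periodic_fn L (A t)) \<Longrightarrow> periodic_fn L (Dt A t)"
  unfolding periodic_fn_def Dt_def by presburger

lemma continuous_on_jet_family:
  assumes "smooth2 A"
  shows "continuous_on UNIV (\<lambda>p. jet (A (fst p)) (snd p))"
proof (intro continuous_on_coordinatewise_then_product)
  fix j
  have "continuous_on UNIV (\<lambda>p. pds2 (replicate j False) A (fst p) (snd p))"
    using assms smooth2_pds2 smooth2_regular2 regular2_def by blast
  then show "continuous_on UNIV (\<lambda>p. jet (A (fst p)) (snd p) j)"
    by (simp add: jet_def pds2_replicate_False)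
qed

lemma has_real_derivative_integral_local_fn_jet:
  assumes h: "local_fn N h" and A: "smooth2 A1" "smooth2 A2"
  shows "((\<lambda>t. integral {a..b} (\<lambda>x. h (jet (A1 t) x) (jet (A2 t) x))) has_real_derivative
    integral {a..b} (\<lambda>x. \<Sum>j<N. pd1 j h (jet (A1 t0) x) (jet (A2 t0) x) * (Dv ^^ j) (Dt A1 t0) x
                              + pd2 j h (jet (A1 t0) x) (jet (A2 t0) x) * (Dv ^^ j) (Dt A2 t0) x)) (at t0)"
proof -
  define dh where "dh = (\<lambda>t x. \<Sum>j<N. pd1 j h (jet (A1 t) x) (jet (A2 t) x) * (Dv ^^ j) (Dt A1 t) x
                                    + pd2 j h (jet (A1 t) x) (jet (A2 t) x) * (Dv ^^ j) (Dt A2 t) x)"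
  have jet_deriv: "((\<lambda>t. jet (A t) x j) has_real_derivative (Dv ^^ j) (Dt A t) x) (at t)"
    if "smooth2 A" for A :: "real \<Rightarrow> real \<Rightarrow> real" and j t x
    using has_vector_derivative_funpow_Dv_family[OF that]
    by (simp add: jet_def has_real_derivative_iff_has_vector_derivative)
  have cont_Dt: "continuous_on UNIV (\<lambda>p. (Dv ^^ j) (Dt A (fst p)) (snd p))"
    if "smooth2 A" for A :: "real \<Rightarrow> real \<Rightarrow> real" and j
  proof -
    have "continuous_on UNIV (\<lambda>p. pds2 (replicate j False) (Dt A) (fst p) (snd p))"
      using that smooth2_pds2 smooth2_Dt smooth2_regular2 regular2_def by blast
    then show ?thesis
      by (simp add: pds2_replicate_False)
  qed
  have cont_pd: "continuous_on UNIV (\<lambda>p. F (jet (A1 (fst p)) (snd p)) (jet (A2 (fst p)) (snd p)))"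
    if "local_fn N F" for F
    using continuous_on_compose2[OF local_fn_continuous_on[OF that] continuous_on_Pair[OF
        continuous_on_jet_family[OF A(1)] continuous_on_jet_family[OF A(2)]]] by simp
  have "((\<lambda>t. integral (cbox a b) (\<lambda>x. h (jet (A1 t) x) (jet (A2 t) x))) has_field_derivative
      integral (cbox a b) (dh t0)) (at t0 within UNIV)"
  proof (rule leibniz_rule_field_derivative)
    show "((\<lambda>t. h (jet (A1 t) x) (jet (A2 t) x)) has_field_derivative dh t x) (at t within UNIV)" for t x
      unfolding dh_def using A by (intro local_fn_chain_rule[OF h] jet_deriv)
    show "(\<lambda>x. h (jet (A1 t) x) (jet (A2 t) x)) integrable_on cbox a b" for t
      using A by (intro integrable_continuous smooth_fn_continuous_on smooth_fn_local_fn_jet[OF h] smooth2_slice)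
    have "continuous_on UNIV (\<lambda>p. dh (fst p) (snd p))"
      unfolding dh_def using A
      by (intro continuous_intros cont_pd cont_Dt local_fn_pd1[OF h] local_fn_pd2[OF h])
    then show "continuous_on (UNIV \<times> cbox a b) (\<lambda>(t, x). dh t x)"
      by (auto intro: continuous_on_subset simp: split_beta')
  qed auto
  then show ?thesis
    by (simp add: dh_def cbox_interval)
qed

lemma has_real_derivative_functional:
  assumes L: "L \<ge> 0" and h: "local_fn N h" and A: "smooth2 A1" "smooth2 A2"
    and per: "\<And>t. periodic_fn L (A1 t)" "\<And>t. periodic_fn L (A2 t)"
  shows "((\<lambda>t. functional L h (A1 t) (A2 t)) has_real_derivative
    integral {0..L} (\<lambda>x. E1 N h (A1 t0) (A2 t0) x * Dt A1 t0 x + E2 N h (A1 t0) (A2 t0) x * Dt A2 t0 x)) (at t0)"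
  using has_real_derivative_integral_local_fn_jet[OF h A, of 0 L t0]
  unfolding functional_def
  by (simp add: integral_linearization_eq_E[OF L h] smooth2_slice smooth2_Dt A per periodic_fn_Dt)

section \<open>Centroaffine curves and the variation of their invariants\<close>

lemma det3_expand:
  "det3 a b c = a$1 * b$2 * c$3 + a$2 * b$3 * c$1 + a$3 * b$1 * c$2
              - a$1 * b$3 * c$2 - a$2 * b$1 * c$3 - a$3 * b$2 * c$1"
  unfolding det3_def det_3 by simp

lemma det3_multilinear:
  "det3 (u + v) w z = det3 u w z + det3 v w z" "det3 w (u + v) z = det3 w u z + det3 w v z"
  "det3 w z (u + v) = det3 w z u + det3 w z v"
  "det3 (u - v) w z = det3 u w z - det3 v w z" "det3 w (u - v) z = det3 w u z - det3 w v z"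
  "det3 w z (u - v) = det3 w z u - det3 w z v"
  "det3 (- u) w z = - det3 u w z" "det3 w (- u) z = - det3 w u z" "det3 w z (- u) = - det3 w z u"
  "det3 (c *\<^sub>R u) w z = c * det3 u w z" "det3 w (c *\<^sub>R u) z = c * det3 w u z"
  "det3 w z (c *\<^sub>R u) = c * det3 w z u"
  "det3 0 w z = 0" "det3 w 0 z = 0" "det3 w z 0 = 0"
  by (simp_all add: det3_expand algebra_simps)

lemma det3_alternating: "det3 u u z = 0" "det3 u z u = 0" "det3 z u u = 0"
  by (simp_all add: det3_expand algebra_simps)

lemma det3_permute:
  assumes "det3 u v w = d"
  shows "det3 v u w = - d" "det3 w v u = - d" "det3 u w v = - d" "det3 v w u = d" "det3 w u v = d"
  using assms by (simp_all add: det3_expand algebra_simps)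

lemma det3_has_real_derivative:
  assumes "(A has_vector_derivative A') (at t)" "(B has_vector_derivative B') (at t)"
    "(C has_vector_derivative C') (at t)"
  shows "((\<lambda>t. det3 (A t) (B t) (C t)) has_real_derivative
           det3 A' (B t) (C t) + det3 (A t) B' (C t) + det3 (A t) (B t) C') (at t)"
proof -
  have coord: "((\<lambda>t. F t $ i) has_real_derivative F' $ i) (at t)"
    if "(F has_vector_derivative F') (at t)" for F F' and i :: 3
    using bounded_linear.has_vector_derivative[OF bounded_linear_vec_nth that, of i]
    by (simp add: has_real_derivative_iff_has_vector_derivative)
  note coords = coord[OF assms(1)] coord[OF assms(2)] coord[OF assms(3)]
  show ?thesis
    unfolding det3_expand by (rule derivative_eq_intros coords refl)+ (simp add: algebra_simps)
qed

lemma smooth2_det3: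
  "smooth2 A \<Longrightarrow> smooth2 B \<Longrightarrow> smooth2 C \<Longrightarrow> smooth2 (\<lambda>t x. det3 (A t x) (B t x) (C t x))"
  unfolding det3_expand
  by (intro smooth2_add smooth2_diff smooth2_mult bounded_linear.smooth2_compose[OF bounded_linear_vec_nth])

text \<open>For a curve with \<open>\<gamma>''' = (k\<^sub>1' + k\<^sub>2) \<gamma> + k\<^sub>1 \<gamma>'\<close> and \<open>det(\<gamma>, \<gamma>', \<gamma>'') = 1\<close>, Cramer's rule reads
  the invariants off as \<open>k\<^sub>1 = det(\<gamma>, \<gamma>''', \<gamma>'')\<close> and \<open>k\<^sub>1' + k\<^sub>2 = det(\<gamma>''', \<gamma>', \<gamma>'')\<close>; these formulas
  make sense for every curve, which is what lets us differentiate the invariants along a family.\<close>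
definition ca_k1 :: "(real \<Rightarrow> real^3) \<Rightarrow> real \<Rightarrow> real" where
  "ca_k1 c x = det3 (c x) ((Dv ^^ 3) c x) ((Dv ^^ 2) c x)"

definition ca_k2 :: "(real \<Rightarrow> real^3) \<Rightarrow> real \<Rightarrow> real" where
  "ca_k2 c x = det3 ((Dv ^^ 3) c x) (Dv c x) ((Dv ^^ 2) c x) - Dv (ca_k1 c) x"

lemma ca_curve_det3: "ca_curve L c k1 k2 \<Longrightarrow> det3 (c x) (Dv c x) (Dv (Dv c) x) = 1"
  unfolding ca_curve_def funpow_Dv_numeral by blast

lemma ca_curve_third_derivative:
  assumes "ca_curve L c k1 k2"
  shows "Dv (Dv (Dv c)) = (\<lambda>x. (Dv k1 x + k2 x) *\<^sub>R c x + k1 x *\<^sub>R Dv c x)"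
proof -
  have s: "smooth_fn c" "smooth_fn k1"
    using assms unfolding ca_curve_def by auto
  have "Dv (Dv (Dv c)) x = Dv (\<lambda>y. k1 y *\<^sub>R c y) x + k2 x *\<^sub>R c x" for x
    using assms unfolding ca_curve_def funpow_Dv_numeral by blast
  then show ?thesis
    using s by (simp add: Dv_scaleR fun_eq_iff algebra_simps)
qed

lemma ca_curve_k1:
  assumes c: "ca_curve L c k1 k2"
  shows "k1 = ca_k1 c"
proof
  fix x
  show "k1 x = ca_k1 c x"
    unfolding ca_k1_def funpow_Dv_numeral ca_curve_third_derivative[OF c]
    by (simp only: det3_multilinear det3_alternating det3_permute[OF ca_curve_det3[OF c]]) (simp add: ca_curve_det3[OF c])
qed

lemma ca_curve_k2:
  assumes c: "ca_curve L c k1 k2"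
  shows "k2 = ca_k2 c"
proof
  fix x
  show "k2 x = ca_k2 c x"
    unfolding ca_k2_def funpow_Dv_numeral ca_curve_third_derivative[OF c] ca_curve_k1[OF c, symmetric]
    by (simp only: det3_multilinear det3_alternating det3_permute[OF ca_curve_det3[OF c]]) (simp add: ca_curve_det3[OF c])
qed

text \<open>The heart of the computation: for the non-stretching field \<open>X = r \<gamma> + a \<gamma>' + b \<gamma>''\<close>,
  expanding the derivatives of \<open>X\<close> in the frame \<open>\<gamma>, \<gamma>', \<gamma>''\<close> (the structure equation eliminates
  \<open>\<gamma>'''\<close>) turns the first variations of the determinant formulas for \<open>k\<^sub>1\<close> and \<open>k\<^sub>1' + k\<^sub>2\<close> into
  the two components of \<open>\<P> (a, b)\<close>.\<close>
lemma det3_variation_k1: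
  fixes \<gamma> :: "real \<Rightarrow> real^3" and k1 k2 a b :: "real \<Rightarrow> real"
  assumes smooth: "smooth_fn \<gamma>" "smooth_fn k1" "smooth_fn k2" "smooth_fn a" "smooth_fn b"
    and det: "det3 (\<gamma> x) (Dv \<gamma> x) (Dv (Dv \<gamma>) x) = 1"
    and frame_eq: "Dv (Dv (Dv \<gamma>)) = (\<lambda>x. (Dv k1 x + k2 x) *\<^sub>R \<gamma> x + k1 x *\<^sub>R Dv \<gamma> x)"
    and r: "r = (\<lambda>x. - Dv a x - 1/3 * (Dv (Dv b) x + 2 * k1 x * b x))"
    and X: "X = (\<lambda>x. r x *\<^sub>R \<gamma> x + a x *\<^sub>R Dv \<gamma> x + b x *\<^sub>R Dv (Dv \<gamma>) x)"
  shows "det3 (X x) (Dv (Dv (Dv \<gamma>)) x) (Dv (Dv \<gamma>) x) + det3 (\<gamma> x) (Dv (Dv (Dv X)) x) (Dv (Dv \<gamma>) x)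
       + det3 (\<gamma> x) (Dv (Dv (Dv \<gamma>)) x) (Dv (Dv X) x) = Pop1 k1 k2 a b x"
  unfolding X r Pop1_def funpow_Dv_numeral
  using smooth
  apply (simp only: Dv_add Dv_diff Dv_minus Dv_mult Dv_scaleR Dv_const frame_eq smooth_fn_differentiable
     smooth_fn_add smooth_fn_diff smooth_fn_minus smooth_fn_mult smooth_fn_scaleR smooth_fn_const smooth_fn_Dv)
  apply (simp only: det3_multilinear det3_alternating det3_permute[OF det])
  apply (simp add: algebra_simps det)
  done

lemma det3_variation_k2:
  fixes \<gamma> :: "real \<Rightarrow> real^3" and k1 k2 a b :: "real \<Rightarrow> real"
  assumes smooth: "smooth_fn \<gamma>" "smooth_fn k1" "smooth_fn k2" "smooth_fn a" "smooth_fn b"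
    and det: "det3 (\<gamma> x) (Dv \<gamma> x) (Dv (Dv \<gamma>) x) = 1"
    and frame_eq: "Dv (Dv (Dv \<gamma>)) = (\<lambda>x. (Dv k1 x + k2 x) *\<^sub>R \<gamma> x + k1 x *\<^sub>R Dv \<gamma> x)"
    and r: "r = (\<lambda>x. - Dv a x - 1/3 * (Dv (Dv b) x + 2 * k1 x * b x))"
    and X: "X = (\<lambda>x. r x *\<^sub>R \<gamma> x + a x *\<^sub>R Dv \<gamma> x + b x *\<^sub>R Dv (Dv \<gamma>) x)"
  shows "det3 (Dv (Dv (Dv X)) x) (Dv \<gamma> x) (Dv (Dv \<gamma>) x) + det3 (Dv (Dv (Dv \<gamma>)) x) (Dv X x) (Dv (Dv \<gamma>) x)
       + det3 (Dv (Dv (Dv \<gamma>)) x) (Dv \<gamma> x) (Dv (Dv X) x) - Dv (Pop1 k1 k2 a b) x = Pop2 k1 k2 a b x"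
  unfolding X r Pop1_def Pop2_def funpow_Dv_numeral
  using smooth
  apply (simp only: Dv_add Dv_diff Dv_minus Dv_mult Dv_scaleR Dv_const frame_eq smooth_fn_differentiable
     smooth_fn_add smooth_fn_diff smooth_fn_minus smooth_fn_mult smooth_fn_scaleR smooth_fn_const smooth_fn_Dv)
  apply (simp only: det3_multilinear det3_alternating det3_permute[OF det])
  apply (simp add: algebra_simps add_divide_distrib det)
  done

lemma smooth2_ca_k1: "smooth2 \<Gamma> \<Longrightarrow> smooth2 (\<lambda>t. ca_k1 (\<Gamma> t))"
proof -
  assume \<Gamma>: "smooth2 \<Gamma>"
  have "(\<lambda>t. ca_k1 (\<Gamma> t)) =
      (\<lambda>t x. det3 (\<Gamma> t x) (pds2 (replicate 3 False) \<Gamma> t x) (pds2 (replicate 2 False) \<Gamma> t x))"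
    by (simp add: fun_eq_iff ca_k1_def pds2_replicate_False)
  with \<Gamma> show ?thesis
    by (simp add: smooth2_det3 smooth2_pds2)
qed

lemma smooth2_ca_k2: "smooth2 \<Gamma> \<Longrightarrow> smooth2 (\<lambda>t. ca_k2 (\<Gamma> t))"
proof -
  assume \<Gamma>: "smooth2 \<Gamma>"
  have "(\<lambda>t. ca_k2 (\<Gamma> t)) =
      (\<lambda>t x. det3 (pds2 (replicate 3 False) \<Gamma> t x) (pds2 (replicate 1 False) \<Gamma> t x) (pds2 (replicate 2 False) \<Gamma> t x)
             - Dx (\<lambda>t. ca_k1 (\<Gamma> t)) t x)"
    by (simp add: fun_eq_iff ca_k2_def pds2_replicate_False Dx_eq_Dv)
  with \<Gamma> show ?thesis
    by (simp add: smooth2_det3 smooth2_pds2 smooth2_diff smooth2_Dx smooth2_ca_k1)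
qed

lemma periodic_fn_ca_k1: "smooth_fn c \<Longrightarrow> periodic_fn L c \<Longrightarrow> periodic_fn L (ca_k1 c)"
  using periodic_fn_funpow_Dv[of L c] by (simp add: periodic_fn_def ca_k1_def)

lemma periodic_fn_ca_k2:
  assumes "smooth_fn c" "periodic_fn L c" "smooth_fn (ca_k1 c)"
  shows "periodic_fn L (ca_k2 c)"
  using assms periodic_fn_funpow_Dv[of L c] periodic_fn_Dv[of L c] periodic_fn_Dv[OF periodic_fn_ca_k1[OF assms(1,2)]]
  by (simp add: periodic_fn_def ca_k2_def)

lemma Dt_ca_k1:
  assumes \<Gamma>: "smooth2 \<Gamma>"
  shows "Dt (\<lambda>t. ca_k1 (\<Gamma> t)) t x =
      det3 (Dt \<Gamma> t x) ((Dv ^^ 3) (\<Gamma> t) x) ((Dv ^^ 2) (\<Gamma> t) x)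
    + det3 (\<Gamma> t x) ((Dv ^^ 3) (Dt \<Gamma> t) x) ((Dv ^^ 2) (\<Gamma> t) x)
    + det3 (\<Gamma> t x) ((Dv ^^ 3) (\<Gamma> t) x) ((Dv ^^ 2) (Dt \<Gamma> t) x)"
  unfolding ca_k1_def
  using has_vector_derivative_funpow_Dv_family[OF \<Gamma>, of 0]
  by (intro Dt_eqI_real det3_has_real_derivative has_vector_derivative_funpow_Dv_family[OF \<Gamma>]) simp

lemma nonstretching_coefficient:
  "nonstretching k1 r a b \<Longrightarrow> r = (\<lambda>x. - Dv a x - 1/3 * (Dv (Dv b) x + 2 * k1 x * b x))"
  unfolding nonstretching_def funpow_Dv_numeral by (simp add: fun_eq_iff)

lemma Dt_ca_k1_eq_Pop1:
  assumes \<Gamma>: "smooth2 \<Gamma>" and curve: "ca_curve L (\<Gamma> 0) k1 k2" and ab: "smooth_fn a" "smooth_fn b"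
    and ns: "nonstretching k1 r a b" and vel: "Dt \<Gamma> 0 = vfield (\<Gamma> 0) r a b"
  shows "Dt (\<lambda>t. ca_k1 (\<Gamma> t)) 0 = Pop1 k1 k2 a b"
proof
  fix x
  have s: "smooth_fn (\<Gamma> 0)" "smooth_fn k1" "smooth_fn k2"
    using curve unfolding ca_curve_def by auto
  show "Dt (\<lambda>t. ca_k1 (\<Gamma> t)) 0 x = Pop1 k1 k2 a b x"
    unfolding Dt_ca_k1[OF \<Gamma>] vel funpow_Dv_numeral
    by (rule det3_variation_k1[OF s ab ca_curve_det3[OF curve] ca_curve_third_derivative[OF curve]
          nonstretching_coefficient[OF ns]]) (simp add: vfield_def funpow_Dv_numeral fun_eq_iff)
qed

lemma Dt_ca_k2_eq_Pop2:
  assumes \<Gamma>: "smooth2 \<Gamma>" and curve: "ca_curve L (\<Gamma> 0) k1 k2" and ab: "smooth_fn a" "smooth_fn b"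
    and ns: "nonstretching k1 r a b" and vel: "Dt \<Gamma> 0 = vfield (\<Gamma> 0) r a b"
  shows "Dt (\<lambda>t. ca_k2 (\<Gamma> t)) 0 = Pop2 k1 k2 a b"
proof
  fix x
  define A1 where "A1 = (\<lambda>t. ca_k1 (\<Gamma> t))"
  have s: "smooth_fn (\<Gamma> 0)" "smooth_fn k1" "smooth_fn k2"
    using curve unfolding ca_curve_def by auto
  have A1: "smooth2 A1"
    unfolding A1_def using \<Gamma> by (rule smooth2_ca_k1)
  have "(\<lambda>t. ca_k2 (\<Gamma> t) x) =
      (\<lambda>t. det3 ((Dv ^^ 3) (\<Gamma> t) x) ((Dv ^^ 1) (\<Gamma> t) x) ((Dv ^^ 2) (\<Gamma> t) x) - Dx A1 t x)"
    by (simp add: ca_k2_def A1_def Dx_eq_Dv)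
  moreover have "((\<lambda>t. det3 ((Dv ^^ 3) (\<Gamma> t) x) ((Dv ^^ 1) (\<Gamma> t) x) ((Dv ^^ 2) (\<Gamma> t) x) - Dx A1 t x)
      has_real_derivative
        det3 ((Dv ^^ 3) (Dt \<Gamma> 0) x) ((Dv ^^ 1) (\<Gamma> 0) x) ((Dv ^^ 2) (\<Gamma> 0) x)
      + det3 ((Dv ^^ 3) (\<Gamma> 0) x) ((Dv ^^ 1) (Dt \<Gamma> 0) x) ((Dv ^^ 2) (\<Gamma> 0) x)
      + det3 ((Dv ^^ 3) (\<Gamma> 0) x) ((Dv ^^ 1) (\<Gamma> 0) x) ((Dv ^^ 2) (Dt \<Gamma> 0) x) - Dt (Dx A1) 0 x) (at 0)"
    using A1 by (intro DERIV_diff det3_has_real_derivative has_vector_derivative_funpow_Dv_family[OF \<Gamma>]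
        has_real_derivative_Dt smooth2_regular2 smooth2_Dx)
  moreover have "Dt (Dx A1) 0 x = Dv (Pop1 k1 k2 a b) x"
    using Dt_Dx_commute[OF A1] Dt_ca_k1_eq_Pop1[OF assms] by (simp add: A1_def Dx_eq_Dv)
  ultimately have "Dt (\<lambda>t. ca_k2 (\<Gamma> t)) 0 x =
        det3 (Dv (Dv (Dv (Dt \<Gamma> 0))) x) (Dv (\<Gamma> 0) x) (Dv (Dv (\<Gamma> 0)) x)
      + det3 (Dv (Dv (Dv (\<Gamma> 0))) x) (Dv (Dt \<Gamma> 0) x) (Dv (Dv (\<Gamma> 0)) x)
      + det3 (Dv (Dv (Dv (\<Gamma> 0))) x) (Dv (\<Gamma> 0) x) (Dv (Dv (Dt \<Gamma> 0)) x) - Dv (Pop1 k1 k2 a b) x"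
    by (simp add: Dt_eqI_real funpow_Dv_numeral)
  also have "\<dots> = Pop2 k1 k2 a b x"
    unfolding vel
    by (rule det3_variation_k2[OF s ab ca_curve_det3[OF curve] ca_curve_third_derivative[OF curve]
          nonstretching_coefficient[OF ns]]) (simp add: vfield_def funpow_Dv_numeral fun_eq_iff)
  finally show "Dt (\<lambda>t. ca_k2 (\<Gamma> t)) 0 x = Pop2 k1 k2 a b x" .
qed

theorem mainTheorem8:
  fixes L :: real and N :: nat and \<gamma> :: "real \<Rightarrow> real^3"
    and k1 k2 r0 :: "real \<Rightarrow> real" and g h :: jetfn
    and \<Gamma> :: "real \<Rightarrow> real \<Rightarrow> real^3" and K1 K2 :: "real \<Rightarrow> real \<Rightarrow> real"
  assumes curve: "ca_curve L \<gamma> k1 k2"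
    and loc_g: "local_fn N g" and loc_h: "local_fn N h"
    and ns: "nonstretching k1 r0 (E1 N g k1 k2) (E2 N g k1 k2)"
    and fam_smooth: "smooth2 \<Gamma>"
    and fam_0: "\<Gamma> 0 = \<gamma>"
    and fam_curves: "\<forall>t. ca_curve L (\<Gamma> t) (K1 t) (K2 t)"
    and fam_vel: "\<forall>x. ((\<lambda>t. \<Gamma> t x) has_vector_derivative
                      vfield \<gamma> r0 (E1 N g k1 k2) (E2 N g k1 k2) x) (at 0)"
  shows "((\<lambda>t. functional L h (K1 t) (K2 t)) has_real_derivative pbracket L N h g k1 k2) (at 0)"
proof -
  have L: "L \<ge> 0" and k: "smooth_fn k1" "smooth_fn k2"
    using curve unfolding ca_curve_def by auto
  have curve0: "ca_curve L (\<Gamma> 0) k1 k2"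
    using curve fam_0 by simp
  have K: "K1 = (\<lambda>t. ca_k1 (\<Gamma> t))" "K2 = (\<lambda>t. ca_k2 (\<Gamma> t))"
    using fam_curves ca_curve_k1 ca_curve_k2 by blast+
  have k_eq: "ca_k1 (\<Gamma> 0) = k1" "ca_k2 (\<Gamma> 0) = k2"
    using ca_curve_k1[OF curve0] ca_curve_k2[OF curve0] by simp_all
  have per: "periodic_fn L (ca_k1 (\<Gamma> t))" "periodic_fn L (ca_k2 (\<Gamma> t))" for t
    using fam_curves smooth2_slice[OF smooth2_ca_k1[OF fam_smooth]]
    by (auto simp: ca_curve_def intro!: periodic_fn_ca_k1 periodic_fn_ca_k2)
  have vel: "Dt \<Gamma> 0 = vfield (\<Gamma> 0) r0 (E1 N g k1 k2) (E2 N g k1 k2)"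
    using fam_vel fam_0 by (intro ext Dt_eqI) simp
  note variation = Dt_ca_k1_eq_Pop1[OF fam_smooth curve0 _ _ ns vel] Dt_ca_k2_eq_Pop2[OF fam_smooth curve0 _ _ ns vel]
  show ?thesis
    using has_real_derivative_functional[OF L loc_h smooth2_ca_k1[OF fam_smooth] smooth2_ca_k2[OF fam_smooth] per, of 0]
    by (simp add: K k_eq variation pbracket_def smooth_fn_E1 smooth_fn_E2 loc_g k)
qed

end
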